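(* $\frac{n^2}{6}+O(n)\le\mathrm{sat}_\circlearrowright(n,D_1)\le\frac{n^2}{4}+O(n)$.
   Context: $\Omega_n=\{v_0,\dots,v_{n-1}\}$ with cyclic order $v_0<\dots<v_{n-1}<v_0$ (indices mod $n$). A $3$-cgh on $\Omega_n$ is a family of $3$-subsets of $\Omega_n$. For a $3$-cgh $F$, $H$ contains a copy of $F$ if there is an injection of the vertex set of $F$ into $\Omega_n$ preserving the cyclic order and mapping every edge of $F$ to an edge of $H$. $H$ is $F$-saturated if it contains no copy of $F$ but $H\cup\{e\}$ does for every $e\in\binom{\Omega_n}{3}\setminus H$; $\mathrm{sat}_\circlearrowright(n,F)$ is the minimum number of edges of an $F$-saturated $3$-cgh on $\Omega_n$. $D_1$ is the $3$-cgh on $\Omega_4$ with edges $\{v_0,v_1,v_2\}$ and $\{v_0,v_2,v_3\}$ (two triples sharing a pair whose remaining vertices lie on opposite sides of the chord through the shared pair). *)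

theory Defs
  imports Complex_Main
begin

text \<open>Vertices of Omega_n are the naturals 0..n-1 (v_i = i), with the cyclic order
  0 < 1 < ... < n-1 < 0.  cyc x y z means x, y, z appear in this cyclic order.\<close>

definition cyc :: "nat \<Rightarrow> nat \<Rightarrow> nat \<Rightarrow> bool" where
  "cyc x y z \<longleftrightarrow> (x < y \<and> y < z) \<or> (y < z \<and> z < x) \<or> (z < x \<and> x < y)"

definition triples :: "nat \<Rightarrow> nat set set" where
  "triples n = {e. e \<subseteq> {..<n} \<and> card e = 3}"

definition cgh3 :: "nat \<Rightarrow> nat set set \<Rightarrow> bool" where
  "cgh3 n H \<longleftrightarrow> H \<subseteq> triples n"

definition contains_copy :: "nat \<Rightarrow> nat set set \<Rightarrow> nat \<Rightarrow> nat set set \<Rightarrow> bool" where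
  "contains_copy n H k F \<longleftrightarrow> (\<exists>\<phi>. inj_on \<phi> {..<k} \<and> \<phi> ` {..<k} \<subseteq> {..<n} \<and>
     (\<forall>a<k. \<forall>b<k. \<forall>c<k. cyc a b c \<longrightarrow> cyc (\<phi> a) (\<phi> b) (\<phi> c)) \<and>
     (\<forall>e\<in>F. \<phi> ` e \<in> H))"

definition saturated :: "nat \<Rightarrow> nat \<Rightarrow> nat set set \<Rightarrow> nat set set \<Rightarrow> bool" where
  "saturated n k F H \<longleftrightarrow> cgh3 n H \<and> \<not> contains_copy n H k F \<and>
     (\<forall>e \<in> triples n - H. contains_copy n (insert e H) k F)"

definition sat_cyc :: "nat \<Rightarrow> nat \<Rightarrow> nat set set \<Rightarrow> nat" where
  "sat_cyc n k F = Min {card H | H. saturated n k F H}"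

definition D1 :: "nat set set" where
  "D1 = {{0,1,2}, {0,2,3}}"

end

theory Submission
  imports Defs
begin

(* Lower bound: if H is D1-saturated, adding a non-edge T creates a copy of D1, so some pair of T
  lies in an edge of H whose third vertex is separated from the third vertex of T by the chord
  through that pair.  If a vertex x had two partners y, z with neither {x,y} nor {x,z} in an
  edge, applying this to {x,y,z} and then to the triples through x, y resp. z and the third
  vertex of the edge found would yield two edges through one pair on opposite sides of it, a copy
  of D1 in H.  So every vertex shares an edge with all but at most one other vertex, and since an
  edge covers six ordered pairs, 6|H| >= n(n-2).
  Upper bound: group the vertices in consecutive pairs {2i, 2i+1} and join each pair to every
  later vertex.  Whether the third vertex of an edge lies between the other two depends only on
  these two, so this is D1-free; it is saturated and has at most n^2/4 edges. *)

lemma cyc_distinct: "cyc a b c \<Longrightarrow> a \<noteq> b \<and> b \<noteq> c \<and> a \<noteq> c"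
  unfolding cyc_def by auto

lemma cyc_flip: "a \<noteq> b \<Longrightarrow> q \<noteq> a \<Longrightarrow> q \<noteq> b \<Longrightarrow> cyc b q a \<longleftrightarrow> \<not> cyc a q b"
  unfolding cyc_def by auto

(* t and w lie on different arcs of the circle cut by the chord uv *)
definition opposite :: "nat \<Rightarrow> nat \<Rightarrow> nat \<Rightarrow> nat \<Rightarrow> bool" where
  "opposite u v t w \<longleftrightarrow> cyc u t v \<and> cyc v w u \<or> cyc u w v \<and> cyc v t u"

lemma opposite_swap: "opposite u v t w \<longleftrightarrow> opposite u v w t"
  unfolding opposite_def by blast

lemma opposite_swap_chord: "opposite u v t w \<longleftrightarrow> opposite v u t w"
  unfolding opposite_def by blast

lemma opposite_chord_cong: "{u, v} = {u', v'} \<Longrightarrow> opposite u v t w \<longleftrightarrow> opposite u' v' t w"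
  by (auto simp: doubleton_eq_iff opposite_swap_chord)

lemma opposite_distinct: "opposite u v t w \<Longrightarrow> distinct [u, v, t, w]"
  unfolding opposite_def cyc_def by auto

lemma opposite_crossing: "opposite u v x w \<Longrightarrow> opposite x w u v"
  unfolding opposite_def cyc_def by (elim disjE conjE; linarith)

lemma opposite_crossing_diagonal: "opposite u v x w \<Longrightarrow> opposite u w x s \<Longrightarrow> opposite u w v s"
  unfolding opposite_def cyc_def by (elim disjE conjE; linarith)

lemma opposite_iff_arcs:
  "opposite a b p q \<longleftrightarrow> a \<noteq> b \<and> p \<notin> {a, b} \<and> q \<notin> {a, b} \<and> (cyc a p b \<longleftrightarrow> \<not> cyc a q b)"
  unfolding opposite_def using cyc_flip cyc_distinct by blast

lemma opposite_side_trans: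
  "opposite a b p q \<Longrightarrow> opposite a b p r \<Longrightarrow> opposite a b q s \<Longrightarrow> opposite a b r s"
  unfolding opposite_iff_arcs by blast

lemma finite_triples: "finite (triples n)"
  unfolding triples_def by (rule finite_subset[of _ "Pow {..<n}"]) auto

lemma cgh3_finite: "cgh3 n H \<Longrightarrow> finite H"
  unfolding cgh3_def using finite_subset finite_triples by blast

lemma cgh3_vertex_less: "cgh3 n H \<Longrightarrow> e \<in> H \<Longrightarrow> x \<in> e \<Longrightarrow> x < n"
  unfolding cgh3_def triples_def by auto

lemma sat_cyc_le: "saturated n k F H \<Longrightarrow> sat_cyc n k F \<le> card H"
  unfolding sat_cyc_def saturated_def cgh3_def
  by (rule Min_le, rule finite_subset[of _ "card ` Pow (triples n)"]) (auto simp: finite_triples)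

lemma sat_cyc_attained:
  assumes "saturated n k F H"
  shows "\<exists>H'. saturated n k F H' \<and> sat_cyc n k F = card H'"
proof -
  have "finite {card H | H. saturated n k F H}"
    unfolding saturated_def cgh3_def
    by (rule finite_subset[of _ "card ` Pow (triples n)"]) (auto simp: finite_triples)
  then have "sat_cyc n k F \<in> {card H | H. saturated n k F H}"
    unfolding sat_cyc_def by (rule Min_in) (use assms in blast)
  then show ?thesis by auto
qed

lemma D1_copyI:
  assumes "a < n" "b < n" "c < n" "d < n" "cyc a b c" "cyc c d a" "{a,b,c} \<in> G" "{a,c,d} \<in> G"
  shows "contains_copy n G 4 D1"
proof -
  define \<phi> where "\<phi> i = (if i = 0 then a else if i = 1 then b else if i = 2 then c else d)" for i :: nat
  have all_less4: "(\<forall>i<4. P i) \<longleftrightarrow> P 0 \<and> P 1 \<and> P 2 \<and> P 3" for P :: "nat \<Rightarrow> bool"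
    by (auto simp: less_Suc_eq numeral_eq_Suc)
  have "inj_on \<phi> {..<4}"
    unfolding inj_on_def \<phi>_def using assms(5,6) by (auto simp: cyc_def less_Suc_eq numeral_eq_Suc)
  moreover have "\<phi> ` {..<4} \<subseteq> {..<n}"
    unfolding \<phi>_def using assms(1-4) by (auto simp: less_Suc_eq numeral_eq_Suc)
  moreover have "\<forall>x<4. \<forall>y<4. \<forall>z<4. cyc x y z \<longrightarrow> cyc (\<phi> x) (\<phi> y) (\<phi> z)"
    unfolding all_less4 \<phi>_def using assms(5,6) by (simp add: cyc_def; arith)
  moreover have "\<forall>e\<in>D1. \<phi> ` e \<in> G"
    unfolding D1_def \<phi>_def using assms(7,8) by (auto simp: insert_commute)
  ultimately show ?thesis unfolding contains_copy_def by blast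
qed

lemma contains_D1_iff:
  assumes "cgh3 n G"
  shows "contains_copy n G 4 D1 \<longleftrightarrow>
    (\<exists>u v t w. {u,v,t} \<in> G \<and> {u,v,w} \<in> G \<and> opposite u v t w)"
proof
  assume "contains_copy n G 4 D1"
  then obtain \<phi> where cyc: "\<forall>a<4. \<forall>b<4. \<forall>c<4. cyc a b c \<longrightarrow> cyc (\<phi> a) (\<phi> b) (\<phi> c)"
    and edges: "\<forall>e\<in>D1. \<phi> ` e \<in> G"
    unfolding contains_copy_def by blast
  have "{\<phi> 0, \<phi> 2, \<phi> 1} \<in> G" "{\<phi> 0, \<phi> 2, \<phi> 3} \<in> G"
    using edges by (auto simp: D1_def insert_commute)
  moreover have "opposite (\<phi> 0) (\<phi> 2) (\<phi> 1) (\<phi> 3)"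
    using cyc unfolding opposite_def by (auto simp: cyc_def)
  ultimately show "\<exists>u v t w. {u,v,t} \<in> G \<and> {u,v,w} \<in> G \<and> opposite u v t w" by blast
next
  assume "\<exists>u v t w. {u,v,t} \<in> G \<and> {u,v,w} \<in> G \<and> opposite u v t w"
  then obtain u v t w where e: "{u,v,t} \<in> G" "{u,v,w} \<in> G" and o: "opposite u v t w" by blast
  have "u < n" "v < n" "t < n" "w < n"
    using cgh3_vertex_less[OF assms e(1)] cgh3_vertex_less[OF assms e(2)] by auto
  then show "contains_copy n G 4 D1"
    using o e D1_copyI[of u n t v w G] D1_copyI[of v n t u w G]
    unfolding opposite_def by (auto simp: insert_commute)
qed

lemma saturated_D1_no_opposite_edges:
  assumes "saturated n 4 D1 H" "{u,v,t} \<in> H" "{u,v,w} \<in> H"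
  shows "\<not> opposite u v t w"
proof -
  have "cgh3 n H" "\<not> contains_copy n H 4 D1" using assms(1) unfolding saturated_def by auto
  then show ?thesis using assms(2,3) contains_D1_iff by blast
qed

lemma saturated_D1_non_edge:
  assumes sat: "saturated n 4 D1 H" and T: "T \<in> triples n - H"
  shows "\<exists>u v t w. T = {u,v,t} \<and> {u,v,w} \<in> H \<and> opposite u v t w"
proof -
  have c: "cgh3 n (insert T H)" using sat T unfolding saturated_def cgh3_def by blast
  have "contains_copy n (insert T H) 4 D1" using sat T unfolding saturated_def by blast
  then obtain u v t w where e: "{u,v,t} \<in> insert T H" "{u,v,w} \<in> insert T H"
    and o: "opposite u v t w"
    unfolding contains_D1_iff[OF c] by blast
  have "t \<notin> {u,v,w}" using opposite_distinct[OF o] by simp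
  then have "{u,v,t} \<noteq> {u,v,w}" by blast
  moreover have "\<not> ({u,v,t} \<in> H \<and> {u,v,w} \<in> H)"
    using saturated_D1_no_opposite_edges[OF sat] o by blast
  ultimately consider "{u,v,t} = T" "{u,v,w} \<in> H" | "{u,v,w} = T" "{u,v,t} \<in> H"
    using e by blast
  then show ?thesis
  proof cases
    case 1
    then show ?thesis using o by blast
  next
    case 2
    then show ?thesis using o opposite_swap by blast
  qed
qed

definition covers :: "nat set set \<Rightarrow> nat \<Rightarrow> nat \<Rightarrow> bool" where
  "covers H x y \<longleftrightarrow> (\<exists>e\<in>H. x \<in> e \<and> y \<in> e)"

lemma saturated_D1_uncovered_pair:
  assumes sat: "saturated n 4 D1 H" and "x < n" "y < n" "z < n" "distinct [x, y, z]"
    and xy: "\<not> covers H x y"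
  shows "\<exists>w. {y,z,w} \<in> H \<and> opposite y z x w \<or> {x,z,w} \<in> H \<and> opposite x z y w"
proof -
  have "{x,y,z} \<in> triples n - H" using assms unfolding triples_def covers_def by auto
  then obtain u v t w where T: "{x,y,z} = {u,v,t}" and e: "{u,v,w} \<in> H" and o: "opposite u v t w"
    using saturated_D1_non_edge[OF sat] by metis
  have "{u,v} \<noteq> {x,y}" using xy e unfolding covers_def by auto
  moreover have "{u,v} = {x,y,z} - {t}" "t \<in> {x,y,z}" using T opposite_distinct[OF o] by auto
  ultimately consider "t = x" "{u,v} = {y,z}" | "t = y" "{u,v} = {x,z}"
    using assms(5) by auto
  then show ?thesis
  proof cases
    case 1
    then have "{u,v,w} = {y,z,w}" by blast
    then show ?thesis using e o opposite_chord_cong[OF 1(2)] 1(1) by auto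
  next
    case 2
    then have "{u,v,w} = {x,z,w}" by blast
    then show ?thesis using e o opposite_chord_cong[OF 2(2)] 2(1) by auto
  qed
qed

lemma saturated_D1_crossing_uncovered:
  assumes sat: "saturated n 4 D1 H" and x: "x < n" and e: "{u,v,w} \<in> H" and o: "opposite u v x w"
    and xu: "\<not> covers H x u" and xv: "\<not> covers H x v"
  shows False
proof -
  have "u < n" "v < n" "w < n"
    using e sat cgh3_vertex_less unfolding saturated_def by blast+
  have d: "distinct [u, v, x, w]" using opposite_distinct[OF o] .
  \<comment> \<open>the non-edge {x,p,w} cannot be completed through pw, which already carries {p,w,q}\<close>
  have through_xw: "\<exists>s. {x,w,s} \<in> H \<and> opposite x w p s"
    if p: "p < n" "p \<in> {u,v}" and xp: "\<not> covers H x p" and o': "opposite p q x w" and e': "{p,w,q} \<in> H"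
    for p q
  proof -
    obtain s where "{p,w,s} \<in> H \<and> opposite p w x s \<or> {x,w,s} \<in> H \<and> opposite x w p s"
      using saturated_D1_uncovered_pair[OF sat x p(1) \<open>w < n\<close> _ xp] p(2) d by auto
    moreover have "\<not> opposite p w q s" if "{p,w,s} \<in> H"
      using saturated_D1_no_opposite_edges[OF sat e' that] .
    ultimately show ?thesis using opposite_crossing_diagonal[OF o'] by blast
  qed
  obtain s where s: "{x,w,s} \<in> H" "opposite x w u s"
    using through_xw[of u v] \<open>u < n\<close> xu o e by (auto simp: insert_commute)
  obtain s' where s': "{x,w,s'} \<in> H" "opposite x w v s'"
    using through_xw[of v u] \<open>v < n\<close> xv o e by (auto simp: insert_commute opposite_swap_chord)
  have "opposite x w s s'"
    using opposite_side_trans[OF opposite_crossing[OF o] s(2) s'(2)] .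
  then show False using saturated_D1_no_opposite_edges[OF sat s(1) s'(1)] by blast
qed

lemma saturated_D1_uncovered_unique:
  assumes sat: "saturated n 4 D1 H" and x: "x < n" and "y < n" "z < n" "y \<noteq> x" "z \<noteq> x"
    and xy: "\<not> covers H x y" and xz: "\<not> covers H x z"
  shows "y = z"
proof (rule ccontr)
  assume "y \<noteq> z"
  then obtain w where "{y,z,w} \<in> H \<and> opposite y z x w \<or> {x,z,w} \<in> H \<and> opposite x z y w"
    using saturated_D1_uncovered_pair[OF sat x \<open>y < n\<close> \<open>z < n\<close> _ xy] assms(5,6) by auto
  moreover have "{x,z,w} \<notin> H" using xz unfolding covers_def by auto
  ultimately show False using saturated_D1_crossing_uncovered[OF sat x _ _ xy xz] by blast
qed

lemma saturated_D1_covered_degree: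
  assumes sat: "saturated n 4 D1 H" and x: "x < n"
  shows "n \<le> card {y. y < n \<and> y \<noteq> x \<and> covers H x y} + 2"
proof -
  define N where "N = {y. y < n \<and> y \<noteq> x \<and> covers H x y}"
  define R where "R = {y. y < n \<and> y \<noteq> x \<and> \<not> covers H x y}"
  have "card R \<le> 1"
    unfolding R_def using saturated_D1_uncovered_unique[OF sat x] by (auto simp: card_le_Suc0_iff_eq)
  have "{..<n} - {x} = N \<union> R" unfolding N_def R_def by auto
  then have "n - 1 = card (N \<union> R)"
    using x by (metis card_Diff_singleton card_lessThan finite_lessThan lessThan_iff)
  also have "\<dots> \<le> card N + card R" by (rule card_Un_le)
  finally show ?thesis using \<open>card R \<le> 1\<close> unfolding N_def by linarith
qed

lemma card_offdiag: "finite e \<Longrightarrow> card (e \<times> e - Id_on e) = card e * card e - card e"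
proof -
  assume "finite e"
  have "Id_on e = (\<lambda>x. (x, x)) ` e" by auto
  then have "finite (Id_on e)" "card (Id_on e) = card e"
    using \<open>finite e\<close> by (simp_all add: card_image inj_on_def)
  moreover have "Id_on e \<subseteq> e \<times> e" by auto
  ultimately show ?thesis by (simp add: card_Diff_subset card_cartesian_product)
qed

lemma card_covered_pairs:
  assumes H: "cgh3 n H"
  shows "card {(x, y). x < n \<and> y < n \<and> x \<noteq> y \<and> covers H x y} \<le> 6 * card H"
proof -
  have three: "card e = 3" if "e \<in> H" for e using H that unfolding cgh3_def triples_def by auto
  then have fin: "finite e" if "e \<in> H" for e using that card.infinite by fastforce
  have "{(x, y). x < n \<and> y < n \<and> x \<noteq> y \<and> covers H x y} \<subseteq> (\<Union>e\<in>H. e \<times> e - Id_on e)"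
    unfolding covers_def by auto
  then have "card {(x, y). x < n \<and> y < n \<and> x \<noteq> y \<and> covers H x y} \<le> card (\<Union>e\<in>H. e \<times> e - Id_on e)"
    by (rule card_mono[rotated]) (use cgh3_finite[OF H] fin in auto)
  also have "\<dots> \<le> (\<Sum>e\<in>H. card (e \<times> e - Id_on e))" by (rule card_UN_le[OF cgh3_finite[OF H]])
  also have "\<dots> = (\<Sum>e\<in>H. 6)" by (intro sum.cong refl) (simp add: card_offdiag three fin)
  finally show ?thesis by simp
qed

lemma saturated_D1_card_lower:
  assumes sat: "saturated n 4 D1 H"
  shows "n * n \<le> 6 * card H + 2 * n"
proof -
  define N where "N x = {y. y < n \<and> y \<noteq> x \<and> covers H x y}" for x
  have "n * n \<le> (\<Sum>x<n. card (N x) + 2)"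
    using sum_bounded_below[of "{..<n}" n] saturated_D1_covered_degree[OF sat] unfolding N_def by simp
  also have "\<dots> = (\<Sum>x<n. card (N x)) + 2 * n" by (subst sum.distrib) simp
  also have "(\<Sum>x<n. card (N x)) = card (Sigma {..<n} N)"
    by (rule card_SigmaI[symmetric]) (auto simp: N_def)
  also have "Sigma {..<n} N = {(x, y). x < n \<and> y < n \<and> x \<noteq> y \<and> covers H x y}"
    unfolding N_def by auto
  also have "card \<dots> \<le> 6 * card H"
    using sat card_covered_pairs unfolding saturated_def by blast
  finally show ?thesis by simp
qed

lemma card_3_sorted:
  fixes T :: "nat set"
  assumes "card T = 3"
  shows "\<exists>p q r. p < q \<and> q < r \<and> T = {p, q, r}"
proof -
  have "finite T" using assms card.infinite by fastforce
  then have len: "length (sorted_list_of_set T) = 3" and set: "set (sorted_list_of_set T) = T"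
    and sorted: "sorted_wrt (<) (sorted_list_of_set T)"
    using assms by auto
  obtain p q r where "sorted_list_of_set T = [p, q, r]"
    using len by (auto simp: numeral_3_eq_3 length_Suc_conv simp del: length_sorted_list_of_set)
  then show ?thesis using set sorted by auto
qed

definition pair_fans :: "nat \<Rightarrow> nat set set" where
  "pair_fans n = {{a, Suc a, k} | a k. even a \<and> Suc a < k \<and> k < n}"

lemma pair_fans_cgh3: "cgh3 n (pair_fans n)"
  unfolding cgh3_def pair_fans_def triples_def by auto

lemma pair_fansI: "even a \<Longrightarrow> Suc a < k \<Longrightarrow> k < n \<Longrightarrow> {a, Suc a, k} \<in> pair_fans n"
  unfolding pair_fans_def by blast

lemma pair_fans_between:
  assumes "e \<in> pair_fans n" "{u,v,t} \<subseteq> e" "u < v" "t \<noteq> u" "t \<noteq> v"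
  shows "u < t \<and> t < v \<longleftrightarrow> even u \<and> v \<noteq> Suc u"
  using assms unfolding pair_fans_def by auto

lemma pair_fans_D1_free: "\<not> contains_copy n (pair_fans n) 4 D1"
proof
  assume "contains_copy n (pair_fans n) 4 D1"
  then obtain u v t w where e: "{u,v,t} \<in> pair_fans n" "{u,v,w} \<in> pair_fans n"
    and o: "opposite u v t w"
    using contains_D1_iff[OF pair_fans_cgh3] by blast
  define a b where "a = min u v" and "b = max u v"
  have ab: "{a, b} = {u, v}" "a < b" and tw: "t \<notin> {a, b}" "w \<notin> {a, b}"
    using opposite_distinct[OF o] by (auto simp: a_def b_def)
  have "{a,b,t} = {u,v,t}" "{a,b,w} = {u,v,w}" using ab(1) by blast+
  with e have "{a,b,t} \<in> pair_fans n" "{a,b,w} \<in> pair_fans n" by simp_all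
  then have "a < t \<and> t < b \<longleftrightarrow> even a \<and> b \<noteq> Suc a" "a < w \<and> w < b \<longleftrightarrow> even a \<and> b \<noteq> Suc a"
    using pair_fans_between ab(2) tw by blast+
  moreover have "opposite a b t w" using o opposite_chord_cong[OF ab(1)] by simp
  then have "(a < t \<and> t < b) \<noteq> (a < w \<and> w < b)"
    using ab(2) unfolding opposite_def cyc_def by auto
  ultimately show False by blast
qed

lemma pair_fans_saturated: "saturated n 4 D1 (pair_fans n)"
  unfolding saturated_def
proof (intro conjI ballI pair_fans_cgh3 pair_fans_D1_free)
  fix T assume T: "T \<in> triples n - pair_fans n"
  then have "card T = 3" "T \<subseteq> {..<n}" unfolding triples_def by auto
  then obtain p q r where pqr: "p < q" "q < r" "r < n" and T_eq: "T = {p,q,r}"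
    using card_3_sorted by (metis insert_subset lessThan_iff)
  show "contains_copy n (insert T (pair_fans n)) 4 D1"
  proof (cases "even p")
    case False
    then obtain a where a: "p = Suc a" "even a" by (cases p) auto
    have "{a, Suc a, r} \<in> pair_fans n" using a pqr by (intro pair_fansI) auto
    then have "{p, r, a} \<in> insert T (pair_fans n)" using a(1) by (simp add: insert_commute)
    moreover have "{p, q, r} \<in> insert T (pair_fans n)" using T_eq by simp
    moreover have "cyc p q r" "cyc r a p" using pqr a(1) unfolding cyc_def by auto
    ultimately show ?thesis using pqr a(1) by (intro D1_copyI[of p n q r a]) auto
  next
    case True
    have "q \<noteq> Suc p"
    proof
      assume "q = Suc p"
      then have "T \<in> pair_fans n" using True pqr T_eq by (auto intro: pair_fansI)
      with T show False by simp
    qed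
    then have "{p, Suc p, q} \<in> pair_fans n" using True pqr by (intro pair_fansI) auto
    then have "{q, p, Suc p} \<in> insert T (pair_fans n)" by (simp add: insert_commute)
    moreover have "{q, r, p} \<in> insert T (pair_fans n)" using T_eq by (simp add: insert_commute)
    moreover have "cyc q r p" "cyc p (Suc p) q" using pqr \<open>q \<noteq> Suc p\<close> unfolding cyc_def by auto
    ultimately show ?thesis using pqr \<open>q \<noteq> Suc p\<close> by (intro D1_copyI[of q n r p "Suc p"]) auto
  qed
qed

lemma pair_fans_Suc:
  "pair_fans (Suc n) = pair_fans n \<union> (\<lambda>a. {a, Suc a, n}) ` {a. even a \<and> Suc a < n}"
  unfolding pair_fans_def by (auto simp: less_Suc_eq)

lemma card_pair_fans: "4 * card (pair_fans n) \<le> n ^ 2"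
proof (induction n)
  case 0
  then show ?case by (simp add: pair_fans_def)
next
  case (Suc n)
  have fin: "finite {a. even a \<and> Suc a < n}" by (rule finite_subset[of _ "{..<n}"]) auto
  have "{a. even a \<and> Suc a < n} \<subseteq> (\<lambda>i. 2 * i) ` {..<n div 2}"
  proof
    fix a assume "a \<in> {a. even a \<and> Suc a < n}"
    then have "a = 2 * (a div 2)" "a div 2 < n div 2" by auto
    then show "a \<in> (\<lambda>i. 2 * i) ` {..<n div 2}" by blast
  qed
  then have "card {a. even a \<and> Suc a < n} \<le> card ((\<lambda>i. 2 * i) ` {..<n div 2})"
    by (rule card_mono[rotated]) simp
  also have "\<dots> \<le> n div 2" using card_image_le[of "{..<n div 2}" "\<lambda>i. 2 * i"] by simp
  finally have evens: "card {a. even a \<and> Suc a < n} \<le> n div 2" .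
  have "card (pair_fans (Suc n)) \<le>
      card (pair_fans n) + card ((\<lambda>a. {a, Suc a, n}) ` {a. even a \<and> Suc a < n})"
    unfolding pair_fans_Suc by (rule card_Un_le)
  also have "\<dots> \<le> card (pair_fans n) + card {a. even a \<and> Suc a < n}"
    using card_image_le[OF fin] by simp
  also have "\<dots> \<le> card (pair_fans n) + n div 2" using evens by simp
  finally have "card (pair_fans (Suc n)) \<le> card (pair_fans n) + n div 2" .
  with Suc.IH show ?case by (simp add: power2_eq_square)
qed

theorem propositionA6:
  shows "\<exists>C::real. \<forall>\<^sub>F n in sequentially.
    real n ^ 2 / 6 - C * real n \<le> real (sat_cyc n 4 D1) \<and>
    real (sat_cyc n 4 D1) \<le> real n ^ 2 / 4 + C * real n"
proof (intro exI[of _ 1] always_eventually allI conjI)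
  fix n :: nat
  obtain H where H: "saturated n 4 D1 H" "sat_cyc n 4 D1 = card H"
    using sat_cyc_attained[OF pair_fans_saturated] by blast
  have "real (n * n) \<le> real (6 * card H + 2 * n)"
    using saturated_D1_card_lower[OF H(1)] by (rule of_nat_mono)
  then show "real n ^ 2 / 6 - 1 * real n \<le> real (sat_cyc n 4 D1)"
    unfolding H(2) by (simp add: power2_eq_square)
  have "real (4 * sat_cyc n 4 D1) \<le> real (n ^ 2)"
    using sat_cyc_le[OF pair_fans_saturated, of n] card_pair_fans[of n] by (intro of_nat_mono) linarith
  then show "real (sat_cyc n 4 D1) \<le> real n ^ 2 / 4 + 1 * real n" by simp
qed

end
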